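(* Let $1<R<\infty$, $\mathbb A=A(1,R)$, $h\in\mathcal H(\mathbb A,\ast)$, and $U(\rho)=\frac1{2\pi\rho}\int_{|z|=\rho}|h|^2|dz|$ for $1<\rho<R$. Then $\rho\mapsto\rho\,\dot U(\rho)$ is strictly increasing on $(1,R)$, $U(\rho)>1$ for $1<\rho<R$, the limit $\dot U(1):=\lim_{\rho\searrow1}\rho\,\dot U(\rho)$ exists and satisfies $0\leqslant\dot U(1)<\infty$, and for every $1<\rho<R$ $$\frac1\pi\iint_{A(1,\rho)}|Dh|^2=\rho\,\dot U(\rho)-\dot U(1)<\infty .$$
   Context: $A(a,b)=\{a<|z|<b\}$. $\mathcal H(\mathbb A,\ast)$ denotes the set of sense-preserving harmonic homeomorphisms $h$ of $\mathbb A=A(1,R)$ onto some doubly connected domain whose inner boundary is the unit circle (the bounded complementary component is the closed unit disk), preserving the order of boundary components; in particular $|h(z)|\to1$ as $|z|\searrow1$. $\dot U$ is the derivative in $\rho$; $|Dh|^2=2(|h_z|^2+|h_{\bar z}|^2)$. *)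

theory Defs
  imports "HOL-Analysis.Analysis"
begin

definition annulus :: "real \<Rightarrow> real \<Rightarrow> complex set" where
  "annulus a b = {z. a < cmod z \<and> cmod z < b}"

definition px :: "(complex \<Rightarrow> complex) \<Rightarrow> complex \<Rightarrow> complex" where
  "px f z = vector_derivative (\<lambda>t::real. f (z + of_real t)) (at 0)"

definition py :: "(complex \<Rightarrow> complex) \<Rightarrow> complex \<Rightarrow> complex" where
  "py f z = vector_derivative (\<lambda>t::real. f (z + \<i> * of_real t)) (at 0)"

definition C1_on :: "complex set \<Rightarrow> (complex \<Rightarrow> complex) \<Rightarrow> bool" where
  "C1_on S f \<longleftrightarrow> (\<forall>z\<in>S. f differentiable (at z)) \<and>
                    continuous_on S (px f) \<and> continuous_on S (py f)"

definition harmonic_on :: "complex set \<Rightarrow> (complex \<Rightarrow> complex) \<Rightarrow> bool" where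
  "harmonic_on S h \<longleftrightarrow> open S \<and> C1_on S h \<and> C1_on S (px h) \<and> C1_on S (py h) \<and>
     (\<forall>z\<in>S. px (px h) z + py (py h) z = 0)"

definition dz :: "(complex \<Rightarrow> complex) \<Rightarrow> complex \<Rightarrow> complex" where
  "dz h z = (px h z - \<i> * py h z) / 2"

definition dzbar :: "(complex \<Rightarrow> complex) \<Rightarrow> complex \<Rightarrow> complex" where
  "dzbar h z = (px h z + \<i> * py h z) / 2"

definition jac :: "(complex \<Rightarrow> complex) \<Rightarrow> complex \<Rightarrow> real" where
  "jac h z = (cmod (dz h z))\<^sup>2 - (cmod (dzbar h z))\<^sup>2"

definition Dnorm2 :: "(complex \<Rightarrow> complex) \<Rightarrow> complex \<Rightarrow> real" where
  "Dnorm2 h z = 2 * ((cmod (dz h z))\<^sup>2 + (cmod (dzbar h z))\<^sup>2)"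

text \<open>The class H(A(1,R),*): sense-preserving harmonic homeomorphisms of A(1,R) onto a
  doubly connected domain whose bounded complementary component is the closed unit disk,
  preserving the order of the boundary components (|h(z)| -> 1 as |z| -> 1).\<close>
definition H_star :: "real \<Rightarrow> (complex \<Rightarrow> complex) set" where
  "H_star R = {h. harmonic_on (annulus 1 R) h \<and>
      (\<forall>z\<in>annulus 1 R. jac h z \<ge> 0) \<and>
      (\<exists>g. homeomorphism (annulus 1 R) (h ` annulus 1 R) h g) \<and>
      open (h ` annulus 1 R) \<and> connected (h ` annulus 1 R) \<and>
      card (components (- h ` annulus 1 R)) = 2 \<and>
      connected_component_set (- h ` annulus 1 R) 0 = cball 0 1 \<and>
      (\<forall>e>0. \<exists>d>0. \<forall>z\<in>annulus 1 R. cmod z < 1 + d \<longrightarrow> \<bar>cmod (h z) - 1\<bar> < e)}"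

text \<open>U(rho) = (1/(2 pi rho)) \<integral>_{|z|=rho} |h|^2 |dz| = (1/2pi) \<integral>_0^{2pi} |h(rho e^{it})|^2 dt.\<close>
definition U :: "(complex \<Rightarrow> complex) \<Rightarrow> real \<Rightarrow> real" where
  "U h \<rho> = (1 / (2 * pi)) * integral {0..2*pi} (\<lambda>t. (cmod (h (of_real \<rho> * cis t)))\<^sup>2)"

end

theory Submission
  imports Defs
begin

text \<open>Write \<open>\<Phi>(r, t) = |h(r e\<^sup>i\<^sup>t)|\<^sup>2\<close>, so that \<open>U(r)\<close> is the circular mean of \<open>\<Phi>\<close>. For harmonic
  \<open>h\<close> one has \<open>\<Delta>|h|\<^sup>2 = 2|Dh|\<^sup>2\<close>; in polar coordinates and averaged over a circle, the angular term
  integrates to zero by periodicity, leaving \<open>(r U'(r))' = (r/\<pi>) \<integral>\<^sub>0\<^sup>2\<^sup>\<pi> |Dh(r e\<^sup>i\<^sup>t)|\<^sup>2 dt \<ge> 0\<close>.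
  Integrating in polar coordinates gives \<open>\<integral>\<^bsub>A(s,t)\<^esub> |Dh|\<^sup>2 = \<pi> (t U'(t) - s U'(s))\<close>. If \<open>r U'(r)\<close> were
  constant on an interval, \<open>Dh\<close> would vanish on an annulus and \<open>h\<close> would not be injective; hence
  strict monotonicity. Since \<open>|h| > 1\<close>, \<open>U > 1\<close>; since \<open>U \<rightarrow> 1\<close> at the inner boundary, \<open>r U'(r)\<close>
  cannot become negative (otherwise \<open>U\<close> would increase towards the boundary). So the limit
  \<open>U'(1)\<close> exists, is non-negative, and monotone convergence over the annuli \<open>A(s, \<rho>)\<close>, \<open>s \<searrow> 1\<close>,
  yields the energy identity.\<close>

section \<open>Integration in polar coordinates\<close>

lemma has_integral_twiddle_measure_preserving:
  fixes g :: "'a::euclidean_space \<Rightarrow> 'b::euclidean_space" and g' :: "'b \<Rightarrow> 'a"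
    and f :: "'b \<Rightarrow> 'c::banach"
  assumes g'g: "\<And>x. g' (g x) = x" and gg': "\<And>y. g (g' y) = y"
    and cont: "\<And>x. continuous (at x) g"
    and g_box: "\<And>u v. \<exists>w z. g ` cbox u v = cbox w z"
    and g'_box: "\<And>u v. \<exists>w z. g' ` cbox u v = cbox w z"
    and content: "\<And>u v. measure lborel (g ` cbox u v) = measure lborel (cbox u v)"
    and f: "(f has_integral i) S" and S: "S \<subseteq> cbox c d"
  shows "((\<lambda>x. f (g x)) has_integral i) (g' ` S)"
proof -
  let ?f0 = "\<lambda>y. if y \<in> S then f y else 0"
  have "(?f0 has_integral i) (cbox c d)"
    using f S by simp
  then have "((\<lambda>x. ?f0 (g x)) has_integral (1/1) *\<^sub>R i) (g' ` cbox c d)"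
    by (intro has_integral_twiddle[OF _ g'g gg' cont g_box g'_box]) (simp_all add: content)
  moreover have "(\<lambda>x. ?f0 (g x)) = (\<lambda>x. if x \<in> g' ` S then f (g x) else 0)"
  proof (rule ext)
    fix x
    have "g x \<in> S \<longleftrightarrow> x \<in> g' ` S"
      using g'g gg' by (metis image_eqI imageE)
    then show "?f0 (g x) = (if x \<in> g' ` S then f (g x) else 0)"
      by simp
  qed
  moreover have "g' ` S \<subseteq> g' ` cbox c d"
    using S by blast
  ultimately show ?thesis
    using has_integral_restrict[of "g' ` S" "g' ` cbox c d" "\<lambda>x. f (g x)"] by simp
qed

text \<open>Coordinates for the change to polar coordinates: the change-of-variables theorem lives
  on \<open>real^2\<close>, Fubini on \<open>real \<times> real\<close>, and the theorem on \<open>complex\<close>.\<close>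

definition complex_of_vec2 :: "real^2 \<Rightarrow> complex" where
  "complex_of_vec2 v = Complex (v$1) (v$2)"

definition vec2_of_complex :: "complex \<Rightarrow> real^2" where
  "vec2_of_complex z = (\<chi> i. if i = 1 then Re z else Im z)"

definition pair_of_vec2 :: "real^2 \<Rightarrow> real \<times> real" where
  "pair_of_vec2 v = (v$1, v$2)"

definition vec2_of_pair :: "real \<times> real \<Rightarrow> real^2" where
  "vec2_of_pair p = (\<chi> i. if i = 1 then fst p else snd p)"

lemma vec2_of_complex_nth [simp]: "vec2_of_complex z $ 1 = Re z" "vec2_of_complex z $ 2 = Im z"
  by (simp_all add: vec2_of_complex_def)

lemma vec2_of_pair_nth [simp]: "vec2_of_pair p $ 1 = fst p" "vec2_of_pair p $ 2 = snd p"
  by (simp_all add: vec2_of_pair_def)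

lemma vec2_eqI: "(x::'a::zero^2) $ 1 = y $ 1 \<Longrightarrow> x $ 2 = y $ 2 \<Longrightarrow> x = y"
  by (simp add: vec_eq_iff forall_2)

lemma complex_of_vec2_inverse [simp]: "complex_of_vec2 (vec2_of_complex z) = z"
  by (simp add: complex_of_vec2_def complex_eq_iff)

lemma vec2_of_complex_inverse [simp]: "vec2_of_complex (complex_of_vec2 v) = v"
  by (rule vec2_eqI) (simp_all add: complex_of_vec2_def)

lemma pair_of_vec2_inverse [simp]: "pair_of_vec2 (vec2_of_pair p) = p"
  by (simp add: pair_of_vec2_def)

lemma vec2_of_pair_inverse [simp]: "vec2_of_pair (pair_of_vec2 v) = v"
  by (rule vec2_eqI) (simp_all add: pair_of_vec2_def)

lemma image_cbox_bij:
  assumes "\<And>x. g' (g x) = x" "\<And>y. g (g' y) = y"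
    and "\<And>y. g' y \<in> cbox u v \<longleftrightarrow> y \<in> cbox (g u) (g v)"
  shows "g ` cbox u v = cbox (g u) (g v)"
proof -
  have "y \<in> g ` cbox u v \<longleftrightarrow> g' y \<in> cbox u v" for y
    using assms(1,2) by (metis image_iff)
  then show ?thesis
    using assms(3) by blast
qed

lemma vec2_of_complex_cbox: "vec2_of_complex ` cbox u v = cbox (vec2_of_complex u) (vec2_of_complex v)"
  by (rule image_cbox_bij[OF complex_of_vec2_inverse vec2_of_complex_inverse])
     (simp_all add: cbox_complex_eq mem_box_cart forall_2 complex_of_vec2_def)

lemma complex_of_vec2_cbox: "complex_of_vec2 ` cbox u v = cbox (complex_of_vec2 u) (complex_of_vec2 v)"
  by (rule image_cbox_bij[OF vec2_of_complex_inverse complex_of_vec2_inverse])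
     (simp_all add: cbox_complex_eq mem_box_cart forall_2 complex_of_vec2_def)

lemma pair_of_vec2_cbox: "pair_of_vec2 ` cbox u v = cbox (pair_of_vec2 u) (pair_of_vec2 v)"
  by (rule image_cbox_bij[OF vec2_of_pair_inverse pair_of_vec2_inverse])
     (auto simp: cbox_Pair_eq mem_box_cart forall_2 pair_of_vec2_def)

lemma vec2_of_pair_cbox: "vec2_of_pair ` cbox u v = cbox (vec2_of_pair u) (vec2_of_pair v)"
proof -
  obtain u1 u2 v1 v2 where "u = (u1, u2)" "v = (v1, v2)"
    by fastforce
  then show ?thesis
    by (intro image_cbox_bij[OF pair_of_vec2_inverse vec2_of_pair_inverse])
       (simp add: cbox_Pair_eq mem_box_cart forall_2 pair_of_vec2_def)
qed

lemma content_cbox_vec2: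
  "measure lborel (cbox u (v::real^2)) = (if cbox u v = {} then 0 else (v$1 - u$1) * (v$2 - u$2))"
  by (simp only: content_cbox_if_cart UNIV_2) simp

lemma content_vec2_of_complex_cbox:
  "measure lborel (vec2_of_complex ` cbox u v) = measure lborel (cbox u v)"
proof -
  have "cbox (vec2_of_complex u) (vec2_of_complex v) = {} \<longleftrightarrow> cbox u v = {}"
    by (metis vec2_of_complex_cbox image_is_empty)
  then show ?thesis
    by (simp add: vec2_of_complex_cbox content_cbox_vec2 content_cbox_if Basis_complex_def)
qed

lemma content_pair_of_vec2_cbox:
  "measure lborel (pair_of_vec2 ` cbox u v) = measure lborel (cbox u v)"
proof (cases "cbox u v = {}")
  case False
  then have "u$1 \<le> v$1" "u$2 \<le> v$2"
    by (auto simp: mem_box_cart) (metis order_trans)+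
  then show ?thesis
    using False unfolding pair_of_vec2_cbox content_cbox_vec2 by (simp add: pair_of_vec2_def content_Pair)
qed simp

lemma has_integral_complex_of_vec2:
  fixes f :: "complex \<Rightarrow> 'c::banach"
  assumes "((\<lambda>v. f (complex_of_vec2 v)) has_integral i) S" "S \<subseteq> cbox c d"
  shows "(f has_integral i) (complex_of_vec2 ` S)"
proof -
  have "continuous_on UNIV (\<lambda>z. if i = 1 then Re z else Im z)" for i :: 2
    by (cases "i = 1") (simp_all add: continuous_on_Re continuous_on_Im continuous_on_id)
  then have "continuous_on UNIV vec2_of_complex"
    unfolding vec2_of_complex_def by (rule continuous_on_vec_lambda)
  then have cont: "continuous (at z) vec2_of_complex" for z
    by (simp add: continuous_on_eq_continuous_at)
  have boxes: "\<exists>w z. vec2_of_complex ` cbox u v = cbox w z" "\<exists>w z. complex_of_vec2 ` cbox p q = cbox w z"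
    for u v p q
    by (metis vec2_of_complex_cbox, metis complex_of_vec2_cbox)
  from has_integral_twiddle_measure_preserving[OF complex_of_vec2_inverse vec2_of_complex_inverse
      cont boxes content_vec2_of_complex_cbox assms]
  show ?thesis
    by simp
qed

lemma has_integral_pair_of_vec2:
  fixes f :: "real \<times> real \<Rightarrow> 'c::banach"
  assumes "(f has_integral i) (cbox p q)"
  shows "((\<lambda>v. f (pair_of_vec2 v)) has_integral i) (cbox (vec2_of_pair p) (vec2_of_pair q))"
proof -
  have cont: "continuous (at v) pair_of_vec2" for v
    unfolding pair_of_vec2_def by (intro continuous_intros)
  have boxes: "\<exists>w z. pair_of_vec2 ` cbox u v = cbox w z" "\<exists>w z. vec2_of_pair ` cbox p q = cbox w z"
    for u v p q
    by (metis pair_of_vec2_cbox, metis vec2_of_pair_cbox)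
  from has_integral_twiddle_measure_preserving[OF vec2_of_pair_inverse pair_of_vec2_inverse
      cont boxes content_pair_of_vec2_cbox assms order_refl]
  show ?thesis
    by (simp only: vec2_of_pair_cbox)
qed

definition polar_vec2 :: "real^2 \<Rightarrow> real^2" where
  "polar_vec2 v = (\<chi> i. if i = 1 then v$1 * cos (v$2) else v$1 * sin (v$2))"

definition polar_vec2_deriv :: "real^2 \<Rightarrow> real^2 \<Rightarrow> real^2" where
  "polar_vec2_deriv v w = (\<chi> i. if i = 1 then cos (v$2) * w$1 - v$1 * sin (v$2) * w$2
                                  else sin (v$2) * w$1 + v$1 * cos (v$2) * w$2)"

lemma vec2_eq_axis_sum: "(\<chi> i. if i = 1 then x else y) = x *\<^sub>R axis (1::2) (1::real) + y *\<^sub>R axis 2 1"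
  by (rule vec2_eqI) (simp_all add: axis_def)

lemma has_derivative_polar_vec2: "(polar_vec2 has_derivative polar_vec2_deriv v) (at v within S)"
proof -
  have nth: "((\<lambda>x::real^2. x $ i) has_derivative (\<lambda>h. h $ i)) F" for i F
    by (rule bounded_linear_imp_has_derivative) (rule bounded_linear_vec_nth)
  have "((\<lambda>v. (v$1 * cos (v$2)) *\<^sub>R axis (1::2) (1::real) + (v$1 * sin (v$2)) *\<^sub>R axis 2 1)
     has_derivative (\<lambda>w. (cos (v$2) * w$1 - v$1 * sin (v$2) * w$2) *\<^sub>R axis (1::2) (1::real) +
          (sin (v$2) * w$1 + v$1 * cos (v$2) * w$2) *\<^sub>R axis 2 1)) (at v within S)"
    by (rule derivative_eq_intros nth refl | simp)+ (simp add: algebra_simps)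
  then show ?thesis
    unfolding polar_vec2_def polar_vec2_deriv_def vec2_eq_axis_sum .
qed

lemma det_polar_vec2_deriv: "det (matrix (polar_vec2_deriv v)) = v$1"
proof -
  have "det (matrix (polar_vec2_deriv v)) = v$1 * (cos (v$2))\<^sup>2 + v$1 * (sin (v$2))\<^sup>2"
    by (simp add: det_2 matrix_def polar_vec2_deriv_def axis_def power2_eq_square algebra_simps)
  then show ?thesis
    by (simp flip: distrib_left)
qed

lemma complex_of_vec2_polar: "complex_of_vec2 (polar_vec2 v) = of_real (v$1) * cis (v$2)"
  by (simp add: complex_of_vec2_def polar_vec2_def complex_eq_iff)

lemma inj_on_polar_vec2:
  assumes "\<And>v. v \<in> S \<Longrightarrow> v$1 > 0 \<and> 0 \<le> v$2 \<and> v$2 < 2*pi"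
  shows "inj_on polar_vec2 S"
proof
  fix v w assume v: "v \<in> S" and w: "w \<in> S" and "polar_vec2 v = polar_vec2 w"
  then have eq: "of_real (v$1) * cis (v$2) = of_real (w$1) * cis (w$2)"
    by (metis complex_of_vec2_polar)
  have "v$1 = w$1"
    using arg_cong[OF eq, of cmod] assms[OF v] assms[OF w] by (simp add: norm_mult)
  moreover have "Arg2pi (of_real (u$1) * cis (u$2)) = u$2" if "u \<in> S" for u
    by (rule Arg2pi_unique[of "u$1"]) (use assms[OF that] in \<open>simp_all add: cis_conv_exp\<close>)
  then have "v$2 = w$2"
    using eq v w by metis
  ultimately show "v = w"
    by (rule vec2_eqI)
qed

lemma polar_vec2_image_subset_cbox:
  assumes "0 \<le> a"
  shows "polar_vec2 ` box (vec2_of_pair (a,0)) (vec2_of_pair (b,2*pi))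
    \<subseteq> cbox (vec2_of_pair (-b,-b)) (vec2_of_pair (b,b))"
proof clarify
  fix v assume v: "v \<in> box (vec2_of_pair (a,0)) (vec2_of_pair (b,2*pi))"
  have "\<bar>v$1 * cos (v$2)\<bar> \<le> \<bar>v$1\<bar>" "\<bar>v$1 * sin (v$2)\<bar> \<le> \<bar>v$1\<bar>"
    unfolding abs_mult by (rule mult_left_le, simp_all add: abs_cos_le_one abs_sin_le_one)+
  moreover have "\<bar>v$1\<bar> \<le> b"
    using v assms by (simp add: mem_box_cart forall_2)
  ultimately have "\<bar>v$1 * cos (v$2)\<bar> \<le> b" "\<bar>v$1 * sin (v$2)\<bar> \<le> b"
    by linarith+
  then show "polar_vec2 v \<in> cbox (vec2_of_pair (-b,-b)) (vec2_of_pair (b,b))"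
    by (simp add: mem_box_cart forall_2 polar_vec2_def abs_le_iff)
qed

lemma polar_image_subset_annulus:
  assumes "0 \<le> a"
  shows "complex_of_vec2 ` polar_vec2 ` box (vec2_of_pair (a,0)) (vec2_of_pair (b,2*pi))
    \<subseteq> annulus a b"
  using assms by (auto simp: complex_of_vec2_polar annulus_def norm_mult mem_box_cart forall_2)

lemma annulus_minus_real_axis_subset_polar_image:
  "annulus a b - {z. z \<bullet> \<i> = 0}
    \<subseteq> complex_of_vec2 ` polar_vec2 ` box (vec2_of_pair (a,0)) (vec2_of_pair (b,2*pi))"
proof
  fix z assume z: "z \<in> annulus a b - {z. z \<bullet> \<i> = 0}"
  then have "Arg2pi z \<noteq> 0"
    by (simp add: Arg2pi_eq_0 complex_is_Real_iff inner_complex_def)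
  then have "0 < Arg2pi z" "Arg2pi z < 2*pi"
    using Arg2pi[of z] by auto
  then have "vec2_of_pair (cmod z, Arg2pi z) \<in> box (vec2_of_pair (a,0)) (vec2_of_pair (b,2*pi))"
    using z by (simp add: mem_box_cart forall_2 annulus_def)
  moreover have "complex_of_vec2 (polar_vec2 (vec2_of_pair (cmod z, Arg2pi z))) = z"
    by (simp add: complex_of_vec2_polar complex_eq_iff cos_Arg2pi sin_Arg2pi)
  ultimately show "z \<in> complex_of_vec2 ` polar_vec2 ` box (vec2_of_pair (a,0)) (vec2_of_pair (b,2*pi))"
    by force
qed

lemma continuous_on_compose_polar:
  assumes F: "continuous_on {z. a \<le> cmod z \<and> cmod z \<le> b} F" and "0 \<le> a"
    and "continuous_on C r" "continuous_on C \<theta>" and r: "\<And>x. x \<in> C \<Longrightarrow> a \<le> r x \<and> r x \<le> b"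
  shows "continuous_on C (\<lambda>x. F (of_real (r x) * cis (\<theta> x)))"
proof (rule continuous_on_compose2[OF F])
  show "continuous_on C (\<lambda>x. of_real (r x) * cis (\<theta> x))"
    unfolding cis_conv_exp by (intro continuous_intros assms)
  show "(\<lambda>x. of_real (r x) * cis (\<theta> x)) ` C \<subseteq> {z. a \<le> cmod z \<and> cmod z \<le> b}"
  proof clarify
    fix x assume "x \<in> C"
    then have "a \<le> r x" "r x \<le> b"
      using r by auto
    then show "a \<le> cmod (of_real (r x) * cis (\<theta> x)) \<and> cmod (of_real (r x) * cis (\<theta> x)) \<le> b"
      using \<open>0 \<le> a\<close> by (simp add: norm_mult abs_of_nonneg)
  qed
qed

lemma has_integral_polar_box:
  fixes F :: "complex \<Rightarrow> real"
  assumes "0 \<le> a" and F: "continuous_on {z. a \<le> cmod z \<and> cmod z \<le> b} F"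
  shows "((\<lambda>v. v$1 * F (of_real (v$1) * cis (v$2)))
    has_integral integral {a..b} (\<lambda>r. integral {0..2*pi} (\<lambda>t. r * F (of_real r * cis t))))
      (box (vec2_of_pair (a,0)) (vec2_of_pair (b,2*pi)))"
    (is "(_ has_integral ?J) _")
proof -
  define \<psi> where "\<psi> p = fst p * F (of_real (fst p) * cis (snd p))" for p :: "real \<times> real"
  have \<psi>: "continuous_on (cbox (a,0) (b,2*pi)) \<psi>"
    unfolding \<psi>_def
    by (intro continuous_intros continuous_on_compose_polar[OF F \<open>0 \<le> a\<close>]) (auto simp: cbox_Pair_eq)
  have "(\<psi> has_integral integral (cbox (a,0) (b,2*pi)) \<psi>) (cbox (a,0) (b,2*pi))"
    using integrable_continuous[OF \<psi>] by (rule integrable_integral)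
  moreover have "integral (cbox (a,0) (b,2*pi)) \<psi> = ?J"
    using integral_prod_continuous[OF \<psi>] by (simp add: \<psi>_def cbox_interval)
  ultimately have "((\<lambda>v. \<psi> (pair_of_vec2 v)) has_integral ?J) (cbox (vec2_of_pair (a,0)) (vec2_of_pair (b,2*pi)))"
    by (intro has_integral_pair_of_vec2) simp
  then show ?thesis
    by (simp add: has_integral_open_interval \<psi>_def pair_of_vec2_def)
qed

lemma has_integral_polar_image:
  fixes F :: "complex \<Rightarrow> real"
  assumes ab: "0 < a" "a < b" and F: "continuous_on {z. a \<le> cmod z \<and> cmod z \<le> b} F"
  defines "S \<equiv> box (vec2_of_pair (a,0)) (vec2_of_pair (b,2*pi))"
  shows "(F has_integral integral {a..b} (\<lambda>r. integral {0..2*pi} (\<lambda>t. r * F (of_real r * cis t))))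
           (complex_of_vec2 ` polar_vec2 ` S)"
    (is "(F has_integral ?J) _")
proof -
  have S: "a < v$1 \<and> v$1 < b \<and> 0 < v$2 \<and> v$2 < 2*pi" if "v \<in> S" for v
    using that by (simp add: S_def mem_box_cart forall_2)
  define f :: "real^2 \<Rightarrow> real^1" where "f y = F (complex_of_vec2 y) *\<^sub>R vec 1" for y
  define G where "G v = \<bar>det (matrix (polar_vec2_deriv v))\<bar> *\<^sub>R f (polar_vec2 v)" for v
  have G: "G v = (\<bar>v$1\<bar> * F (of_real (v$1) * cis (v$2))) *\<^sub>R vec 1" for v
    by (simp add: G_def f_def det_polar_vec2_deriv complex_of_vec2_polar)
  have "((\<lambda>v. v$1 * F (of_real (v$1) * cis (v$2))) has_integral ?J) S"
    unfolding S_def using ab by (intro has_integral_polar_box[OF _ F]) simp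
  then have "(G has_integral ?J *\<^sub>R vec 1) S"
  proof (rule has_integral_eq[OF _ has_integral_scaleR_left, rotated])
    fix v assume "v \<in> S"
    then show "(v$1 * F (of_real (v$1) * cis (v$2))) *\<^sub>R vec 1 = G v"
      using S[of v] ab by (simp add: G)
  qed
  moreover have "continuous_on (cbox (vec2_of_pair (a,0)) (vec2_of_pair (b,2*pi))) G"
    unfolding G using ab
    by (intro continuous_intros continuous_on_compose_polar[OF F]) (auto simp: mem_box_cart forall_2)
  then have "G absolutely_integrable_on S"
    unfolding S_def absolutely_integrable_on_open_interval by (rule absolutely_integrable_continuous)
  moreover have "S \<in> sets lebesgue"
    by (simp add: S_def lebesgue_openin[of UNIV] open_box)
  moreover have "inj_on polar_vec2 S"
    by (rule inj_on_polar_vec2) (use S ab in force)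
  ultimately have "f absolutely_integrable_on polar_vec2 ` S \<and> integral (polar_vec2 ` S) f = ?J *\<^sub>R vec 1"
    using has_absolute_integral_change_of_variables[OF _ has_derivative_polar_vec2, of S f]
    unfolding G_def by (blast dest: integral_unique)
  then have "(f has_integral ?J *\<^sub>R vec 1) (polar_vec2 ` S)"
    by (metis absolutely_integrable_on_def has_integral_integrable_integral)
  from has_integral_linear[OF this bounded_linear_vec_nth[of 1]]
  have "((\<lambda>y. F (complex_of_vec2 y)) has_integral ?J) (polar_vec2 ` S)"
    by (simp add: o_def f_def)
  moreover have "polar_vec2 ` S \<subseteq> cbox (vec2_of_pair (-b,-b)) (vec2_of_pair (b,b))"
    unfolding S_def using ab by (intro polar_vec2_image_subset_cbox) simp
  ultimately show ?thesis
    by (rule has_integral_complex_of_vec2)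
qed

lemma has_integral_annulus_polar:
  fixes F :: "complex \<Rightarrow> real"
  assumes "0 < a" "a < b" "continuous_on {z. a \<le> cmod z \<and> cmod z \<le> b} F"
  shows "(F has_integral integral {a..b} (\<lambda>r. integral {0..2*pi} (\<lambda>t. r * F (of_real r * cis t))))
           (annulus a b)"
proof (rule has_integral_spike_set_eq[THEN iffD1, OF _ _ has_integral_polar_image[OF assms]])
  show "negligible {z \<in> complex_of_vec2 ` polar_vec2 ` box (vec2_of_pair (a,0)) (vec2_of_pair (b,2*pi))
      - annulus a b. F z \<noteq> 0}"
    by (rule negligible_subset[OF negligible_empty])
       (use polar_image_subset_annulus[OF less_imp_le[OF assms(1)], of b] in blast)
  have "negligible {z::complex. z \<bullet> \<i> = 0}"
    by (rule negligible_standard_hyperplane) (simp add: Basis_complex_def)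
  then show "negligible {z \<in> annulus a b
      - complex_of_vec2 ` polar_vec2 ` box (vec2_of_pair (a,0)) (vec2_of_pair (b,2*pi)). F z \<noteq> 0}"
    by (rule negligible_subset) (use annulus_minus_real_axis_subset_polar_image in blast)
qed

lemma decseq_converging_from_above:
  fixes a r :: real
  assumes "a < r"
  obtains s :: "nat \<Rightarrow> real" where "\<And>k. a < s k" "\<And>k. s k < r" "decseq s" "s \<longlonglongrightarrow> a"
proof
  define s where "s k = a + (r - a) / real (k + 2)" for k :: nat
  show "a < s k" "s k < r" for k
  proof -
    have "0 < (r - a) / real (k + 2)" "(r - a) / real (k + 2) < r - a"
      using assms by (simp_all add: divide_less_eq)
    then show "a < s k" "s k < r"
      by (simp_all add: s_def)
  qed
  show "decseq s"
    using assms by (auto simp: decseq_Suc_iff s_def intro!: divide_left_mono)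
  have "(\<lambda>k. (r - a) / real (k + 2)) \<longlonglongrightarrow> 0"
    using LIMSEQ_ignore_initial_segment[OF lim_const_over_n[of "r - a"], of 2] by simp
  then show "s \<longlonglongrightarrow> a"
    unfolding s_def using tendsto_add[OF tendsto_const, of _ 0 _ a] by simp
qed

lemma has_integral_nonneg_annulus_exhaustion:
  fixes F :: "complex \<Rightarrow> real"
  assumes "a < r" "\<And>z. 0 \<le> F z"
    and I: "\<And>s. a < s \<Longrightarrow> s < r \<Longrightarrow> (F has_integral I s) (annulus s r)"
    and L: "(I \<longlongrightarrow> L) (at_right a)"
  shows "F integrable_on annulus a r \<and> integral (annulus a r) F = L"
proof -
  obtain s where s: "\<And>k. a < s k" "\<And>k. s k < r" and "decseq s" "s \<longlonglongrightarrow> a"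
    using decseq_converging_from_above[OF assms(1)] by blast
  have "filterlim s (at_right a) sequentially"
    by (rule tendsto_imp_filterlim_at_right[OF \<open>s \<longlonglongrightarrow> a\<close>]) (use s in auto)
  then have I_lim: "(\<lambda>k. I (s k)) \<longlonglongrightarrow> L"
    by (rule filterlim_compose[OF L])
  define f where "f k z = (if z \<in> annulus (s k) r then F z else 0)" for k z
  have sub: "annulus (s k) r \<subseteq> annulus a r" for k
    using s[of k] by (auto simp: annulus_def)
  have f: "(f k has_integral I (s k)) (annulus a r)" for k
    unfolding f_def has_integral_restrict[OF sub] using I s by blast
  have "F integrable_on annulus a r \<and> (\<lambda>k. integral (annulus a r) (f k)) \<longlonglongrightarrow> integral (annulus a r) F"
  proof (rule monotone_convergence_increasing)
    show "f k integrable_on annulus a r" for k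
      using f by blast
    show "f k z \<le> f (Suc k) z" for k z
      using decseq_SucD[OF \<open>decseq s\<close>, of k] assms(2)[of z] by (auto simp: f_def annulus_def)
    show "(\<lambda>k. f k z) \<longlonglongrightarrow> F z" if "z \<in> annulus a r" for z
    proof (rule tendsto_eventually)
      have "\<forall>\<^sub>F k in sequentially. s k < cmod z"
        using order_tendstoD(2)[OF \<open>s \<longlonglongrightarrow> a\<close>] that by (simp add: annulus_def)
      then show "\<forall>\<^sub>F k in sequentially. f k z = F z"
        by eventually_elim (use that in \<open>simp add: f_def annulus_def\<close>)
    qed
    show "bounded (range (\<lambda>k. integral (annulus a r) (f k)))"
      using convergent_imp_bounded[OF I_lim] by (simp add: integral_unique[OF f])
  qed
  then show ?thesis
    using LIMSEQ_unique[OF _ I_lim] by (simp add: integral_unique[OF f])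
qed


section \<open>Partial derivatives in polar coordinates\<close>

lemma px_py_of_has_derivative:
  assumes d: "(f has_derivative f') (at z)"
  shows "px f z = f' 1" "py f z = f' \<i>"
proof -
  have lin: "linear f'"
    using d by (rule has_derivative_linear)
  have "((\<lambda>t::real. f (z + of_real t)) has_derivative (\<lambda>t. f' (of_real t))) (at 0)"
  proof (rule has_derivative_compose[of "\<lambda>t::real. z + of_real t" "\<lambda>t. of_real t" 0 UNIV f f', simplified])
    show "((\<lambda>t. z + complex_of_real t) has_derivative complex_of_real) (at 0)"
      by (auto intro!: derivative_eq_intros)
  qed (use d in simp)
  moreover have "f' (of_real t) = t *\<^sub>R f' 1" for t
    using linear_scale[OF lin, of t 1] by (simp add: scaleR_conv_of_real)
  ultimately have "((\<lambda>t::real. f (z + of_real t)) has_vector_derivative f' 1) (at 0)"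
    by (simp add: has_vector_derivative_def)
  then show "px f z = f' 1"
    unfolding px_def by (rule vector_derivative_at)
  have "((\<lambda>t::real. f (z + \<i> * of_real t)) has_derivative (\<lambda>t. f' (\<i> * of_real t))) (at 0)"
  proof (rule has_derivative_compose[of "\<lambda>t::real. z + \<i> * of_real t" "\<lambda>t. \<i> * of_real t" 0 UNIV f f', simplified])
    show "((\<lambda>t. z + \<i> * complex_of_real t) has_derivative (\<lambda>t. \<i> * complex_of_real t)) (at 0)"
      by (auto intro!: derivative_eq_intros)
  qed (use d in simp)
  moreover have "f' (\<i> * of_real t) = t *\<^sub>R f' \<i>" for t
    using linear_scale[OF lin, of t \<i>] by (simp add: scaleR_conv_of_real mult.commute)
  ultimately have "((\<lambda>t::real. f (z + \<i> * of_real t)) has_vector_derivative f' \<i>) (at 0)"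
    by (simp add: has_vector_derivative_def)
  then show "py f z = f' \<i>"
    unfolding py_def by (rule vector_derivative_at)
qed

lemma has_derivative_px_py:
  assumes "f differentiable (at z)"
  shows "(f has_derivative (\<lambda>v. Re v *\<^sub>R px f z + Im v *\<^sub>R py f z)) (at z)"
proof -
  obtain f' where d: "(f has_derivative f') (at z)"
    using assms differentiable_def by blast
  have lin: "linear f'"
    using d by (rule has_derivative_linear)
  have "f' v = Re v *\<^sub>R px f z + Im v *\<^sub>R py f z" for v
  proof -
    have "v = Re v *\<^sub>R 1 + Im v *\<^sub>R \<i>"
      by (simp add: complex_eq_iff)
    then have "f' v = f' (Re v *\<^sub>R 1 + Im v *\<^sub>R \<i>)"
      by simp
    also have "\<dots> = Re v *\<^sub>R f' 1 + Im v *\<^sub>R f' \<i>"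
      by (simp add: linear_add[OF lin] linear_scale[OF lin])
    finally show ?thesis
      using px_py_of_has_derivative[OF d] by simp
  qed
  then have "f' = (\<lambda>v. Re v *\<^sub>R px f z + Im v *\<^sub>R py f z)"
    by (rule ext)
  then show ?thesis
    using d by simp
qed

lemma has_vector_derivative_comp_px_py:
  fixes \<gamma> :: "real \<Rightarrow> complex"
  assumes "f differentiable (at (\<gamma> s))" and "(\<gamma> has_vector_derivative \<gamma>') (at s within S)"
  shows "((\<lambda>s. f (\<gamma> s)) has_vector_derivative (Re \<gamma>' *\<^sub>R px f (\<gamma> s) + Im \<gamma>' *\<^sub>R py f (\<gamma> s)))
           (at s within S)"
  using has_derivative_compose[OF assms(2)[unfolded has_vector_derivative_def] has_derivative_px_py[OF assms(1)]]
  by (simp add: has_vector_derivative_def scaleR_add_right algebra_simps)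

lemma has_field_derivative_inner:
  fixes g k :: "real \<Rightarrow> 'a::real_inner"
  assumes "(g has_vector_derivative g') (at x within S)" "(k has_vector_derivative k') (at x within S)"
  shows "((\<lambda>x. g x \<bullet> k x) has_field_derivative (g x \<bullet> k' + g' \<bullet> k x)) (at x within S)"
  using bounded_bilinear.has_vector_derivative[OF bounded_bilinear_inner assms]
  by (simp add: has_real_derivative_iff_has_vector_derivative)

lemma Dnorm2_eq_px_py: "Dnorm2 h z = (cmod (px h z))\<^sup>2 + (cmod (py h z))\<^sup>2"
  unfolding Dnorm2_def dz_def dzbar_def cmod_power2
  by (simp add: power2_eq_square field_simps)

lemma Dnorm2_nonneg: "0 \<le> Dnorm2 h z"
  by (simp add: Dnorm2_def)

text \<open>Partial derivatives of \<open>(r, t) \<mapsto> h (r e\<^sup>i\<^sup>t)\<close> and of \<open>\<Phi> = |h|\<^sup>2\<close> in polar coordinates,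
  expanded by the chain rule in terms of \<open>px\<close> and \<open>py\<close>.\<close>

definition h_r :: "(complex \<Rightarrow> complex) \<Rightarrow> real \<Rightarrow> real \<Rightarrow> complex" where
  "h_r h r t = cos t *\<^sub>R px h (of_real r * cis t) + sin t *\<^sub>R py h (of_real r * cis t)"

definition h_rr :: "(complex \<Rightarrow> complex) \<Rightarrow> real \<Rightarrow> real \<Rightarrow> complex" where
  "h_rr h r t =
     cos t *\<^sub>R (cos t *\<^sub>R px (px h) (of_real r * cis t) + sin t *\<^sub>R py (px h) (of_real r * cis t))
   + sin t *\<^sub>R (cos t *\<^sub>R px (py h) (of_real r * cis t) + sin t *\<^sub>R py (py h) (of_real r * cis t))"

definition h_t :: "(complex \<Rightarrow> complex) \<Rightarrow> real \<Rightarrow> real \<Rightarrow> complex" where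
  "h_t h r t = (- (r * sin t)) *\<^sub>R px h (of_real r * cis t) + (r * cos t) *\<^sub>R py h (of_real r * cis t)"

definition h_tt :: "(complex \<Rightarrow> complex) \<Rightarrow> real \<Rightarrow> real \<Rightarrow> complex" where
  "h_tt h r t = (- (r * cos t)) *\<^sub>R px h (of_real r * cis t)
     + (- (r * sin t)) *\<^sub>R ((- (r * sin t)) *\<^sub>R px (px h) (of_real r * cis t)
                          + (r * cos t) *\<^sub>R py (px h) (of_real r * cis t))
     + (- (r * sin t)) *\<^sub>R py h (of_real r * cis t)
     + (r * cos t) *\<^sub>R ((- (r * sin t)) *\<^sub>R px (py h) (of_real r * cis t)
                       + (r * cos t) *\<^sub>R py (py h) (of_real r * cis t))"

definition Phi :: "(complex \<Rightarrow> complex) \<Rightarrow> real \<Rightarrow> real \<Rightarrow> real" where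
  "Phi h r t = h (of_real r * cis t) \<bullet> h (of_real r * cis t)"

definition Phi_r :: "(complex \<Rightarrow> complex) \<Rightarrow> real \<Rightarrow> real \<Rightarrow> real" where
  "Phi_r h r t = 2 * (h (of_real r * cis t) \<bullet> h_r h r t)"

definition Phi_rr :: "(complex \<Rightarrow> complex) \<Rightarrow> real \<Rightarrow> real \<Rightarrow> real" where
  "Phi_rr h r t = 2 * (h_r h r t \<bullet> h_r h r t + h (of_real r * cis t) \<bullet> h_rr h r t)"

definition Phi_t :: "(complex \<Rightarrow> complex) \<Rightarrow> real \<Rightarrow> real \<Rightarrow> real" where
  "Phi_t h r t = 2 * (h (of_real r * cis t) \<bullet> h_t h r t)"

definition Phi_tt :: "(complex \<Rightarrow> complex) \<Rightarrow> real \<Rightarrow> real \<Rightarrow> real" where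
  "Phi_tt h r t = 2 * (h_t h r t \<bullet> h_t h r t + h (of_real r * cis t) \<bullet> h_tt h r t)"

definition dU :: "(complex \<Rightarrow> complex) \<Rightarrow> real \<Rightarrow> real" where
  "dU h r = integral {0..2*pi} (Phi_r h r) / (2*pi)"

definition Dnorm2_circle :: "(complex \<Rightarrow> complex) \<Rightarrow> real \<Rightarrow> real" where
  "Dnorm2_circle h r = integral {0..2*pi} (\<lambda>t. Dnorm2 h (of_real r * cis t))"

text \<open>The polar form \<open>r\<^sup>2 \<Phi>\<^sub>r\<^sub>r + r \<Phi>\<^sub>r + \<Phi>\<^sub>t\<^sub>t = 2 r\<^sup>2 |Dh|\<^sup>2\<close> of \<open>\<Delta>|h|\<^sup>2 = 2|Dh|\<^sup>2\<close>, as an identity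
  in the values \<open>a = h\<^sub>x, b = h\<^sub>y, p = h\<^sub>x\<^sub>x, q = h\<^sub>x\<^sub>y, u = h\<^sub>y\<^sub>x, v = h\<^sub>y\<^sub>y\<close>; the Laplace equation
  \<open>p + v = 0\<close> removes the term \<open>2 h \<bullet> \<Delta>h\<close>.\<close>

lemma polar_laplacian_identity:
  fixes r c s :: real and h0 a b p q u v :: complex
  assumes cs: "c\<^sup>2 + s\<^sup>2 = 1" and lap: "p + v = 0"
  defines "H1 \<equiv> c *\<^sub>R a + s *\<^sub>R b"
  defines "H2 \<equiv> c *\<^sub>R (c *\<^sub>R p + s *\<^sub>R q) + s *\<^sub>R (c *\<^sub>R u + s *\<^sub>R v)"
  defines "T1 \<equiv> (- (r * s)) *\<^sub>R a + (r * c) *\<^sub>R b"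
  defines "T2 \<equiv> (- (r * c)) *\<^sub>R a + (- (r * s)) *\<^sub>R ((- (r * s)) *\<^sub>R p + (r * c) *\<^sub>R q)
     + (- (r * s)) *\<^sub>R b + (r * c) *\<^sub>R ((- (r * s)) *\<^sub>R u + (r * c) *\<^sub>R v)"
  shows "r * (2 * (h0 \<bullet> H1) + r * (2 * (H1 \<bullet> H1 + h0 \<bullet> H2))) + 2 * (T1 \<bullet> T1 + h0 \<bullet> T2)
       = 2 * r\<^sup>2 * ((cmod a)\<^sup>2 + (cmod b)\<^sup>2)"
proof -
  have v: "Re v = - Re p" "Im v = - Im p"
    using lap by (auto simp: complex_eq_iff)
  show ?thesis
    unfolding H1_def H2_def T1_def T2_def inner_complex_def cmod_power2
    apply (simp add: v)
    apply (simp add: algebra_simps power2_eq_square[symmetric])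
    using cs apply algebra
    done
qed

lemma has_vector_derivative_radial: "((\<lambda>r. of_real r * cis t) has_vector_derivative cis t) (at r within S)"
  by (auto intro!: derivative_eq_intros)

lemma has_vector_derivative_angular:
  "((\<lambda>s. of_real r * cis s) has_vector_derivative (of_real r * (\<i> * cis s))) (at s within S)"
proof -
  have "(cis has_vector_derivative (\<i> * cis s)) (at s within S)"
    using has_derivative_cis[OF has_derivative_ident, of s S] by (simp add: has_vector_derivative_def)
  then show ?thesis
    by (rule has_vector_derivative_mult_right)
qed

section \<open>Harmonic maps of an annulus\<close>

locale harmonic_annulus =
  fixes a R :: real and h :: "complex \<Rightarrow> complex"
  assumes a_nonneg: "0 \<le> a" and harmonic: "harmonic_on (annulus a R) h"
begin

lemma differentiable_h: "z \<in> annulus a R \<Longrightarrow> h differentiable (at z)"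
  and differentiable_px: "z \<in> annulus a R \<Longrightarrow> px h differentiable (at z)"
  and differentiable_py: "z \<in> annulus a R \<Longrightarrow> py h differentiable (at z)"
  and continuous_on_px: "continuous_on (annulus a R) (px h)"
  and continuous_on_py: "continuous_on (annulus a R) (py h)"
  and continuous_on_pxx: "continuous_on (annulus a R) (px (px h))"
  and continuous_on_pxy: "continuous_on (annulus a R) (py (px h))"
  and continuous_on_pyx: "continuous_on (annulus a R) (px (py h))"
  and continuous_on_pyy: "continuous_on (annulus a R) (py (py h))"
  and laplace: "z \<in> annulus a R \<Longrightarrow> px (px h) z + py (py h) z = 0"
  using harmonic by (auto simp: harmonic_on_def C1_on_def)

lemma continuous_on_h: "continuous_on (annulus a R) h"
  by (meson continuous_at_imp_continuous_on differentiable_h differentiable_imp_continuous_within)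

lemma continuous_on_Dnorm2: "continuous_on (annulus a R) (Dnorm2 h)"
  unfolding Dnorm2_eq_px_py by (intro continuous_intros continuous_on_px continuous_on_py)

lemma polar_in_annulus: "r \<in> {a<..<R} \<Longrightarrow> of_real r * cis t \<in> annulus a R"
  using a_nonneg by (simp add: annulus_def norm_mult)

lemma continuous_on_polar:
  assumes "continuous_on (annulus a R) k"
  shows "continuous_on ({a<..<R} \<times> T) (\<lambda>p. k (of_real (fst p) * cis (snd p)))"
proof (rule continuous_on_compose2[OF assms])
  show "continuous_on ({a<..<R} \<times> T) (\<lambda>p. complex_of_real (fst p) * cis (snd p))"
    unfolding cis_conv_exp by (intro continuous_intros)
qed (use polar_in_annulus in auto)

lemma continuous_on_circle:
  assumes "continuous_on (annulus a R) k" "r \<in> {a<..<R}"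
  shows "continuous_on T (\<lambda>t. k (of_real r * cis t))"
proof (rule continuous_on_compose2[OF assms(1)])
  show "continuous_on T (\<lambda>t. complex_of_real r * cis t)"
    unfolding cis_conv_exp by (intro continuous_intros)
qed (use polar_in_annulus assms(2) in auto)

lemma radial_derivative:
  assumes "\<And>z. z \<in> annulus a R \<Longrightarrow> f differentiable (at z)" "r \<in> {a<..<R}"
  shows "((\<lambda>r. f (of_real r * cis t)) has_vector_derivative
           (cos t *\<^sub>R px f (of_real r * cis t) + sin t *\<^sub>R py f (of_real r * cis t))) (at r within S)"
  using has_vector_derivative_comp_px_py[OF assms(1)[OF polar_in_annulus[OF assms(2)]]
      has_vector_derivative_radial]
  by simp

lemma angular_derivative:
  assumes "\<And>z. z \<in> annulus a R \<Longrightarrow> f differentiable (at z)" "r \<in> {a<..<R}"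
  shows "((\<lambda>s. f (of_real r * cis s)) has_vector_derivative
           ((- (r * sin s)) *\<^sub>R px f (of_real r * cis s) + (r * cos s) *\<^sub>R py f (of_real r * cis s)))
           (at s within S)"
  using has_vector_derivative_comp_px_py[OF assms(1)[OF polar_in_annulus[OF assms(2)]]
      has_vector_derivative_angular]
  by simp

lemma h_radial_derivative:
  "r \<in> {a<..<R} \<Longrightarrow> ((\<lambda>r. h (of_real r * cis t)) has_vector_derivative h_r h r t) (at r within S)"
  unfolding h_r_def by (rule radial_derivative[OF differentiable_h])

lemma h_r_radial_derivative:
  assumes "r \<in> {a<..<R}"
  shows "((\<lambda>r. h_r h r t) has_vector_derivative h_rr h r t) (at r within S)"
  unfolding h_r_def h_rr_def
  by (intro has_vector_derivative_add bounded_linear.has_vector_derivative[OF bounded_linear_scaleR_right]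
      radial_derivative[OF differentiable_px] radial_derivative[OF differentiable_py] assms)

lemma h_angular_derivative:
  "r \<in> {a<..<R} \<Longrightarrow> ((\<lambda>s. h (of_real r * cis s)) has_vector_derivative h_t h r s) (at s within S)"
  unfolding h_t_def by (rule angular_derivative[OF differentiable_h])

lemma h_t_angular_derivative:
  assumes "r \<in> {a<..<R}"
  shows "((\<lambda>s. h_t h r s) has_vector_derivative h_tt h r s) (at s within S)"
proof -
  have "((\<lambda>s. - (r * sin s)) has_field_derivative - (r * cos s)) (at s within S)"
    "((\<lambda>s. r * cos s) has_field_derivative - (r * sin s)) (at s within S)"
    by (auto intro!: derivative_eq_intros)
  then have "((\<lambda>s. h_t h r s) has_vector_derivative
     ((- (r * sin s)) *\<^sub>R ((- (r * sin s)) *\<^sub>R px (px h) (of_real r * cis s)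
                          + (r * cos s) *\<^sub>R py (px h) (of_real r * cis s))
       + (- (r * cos s)) *\<^sub>R px h (of_real r * cis s))
     + ((r * cos s) *\<^sub>R ((- (r * sin s)) *\<^sub>R px (py h) (of_real r * cis s)
                        + (r * cos s) *\<^sub>R py (py h) (of_real r * cis s))
       + (- (r * sin s)) *\<^sub>R py h (of_real r * cis s))) (at s within S)"
    unfolding h_t_def
    by (intro has_vector_derivative_add has_vector_derivative_scaleR
        angular_derivative[OF differentiable_px] angular_derivative[OF differentiable_py] assms)
  then show ?thesis
    by (simp add: h_tt_def algebra_simps)
qed

lemma Phi_radial_derivative:
  assumes "r \<in> {a<..<R}"
  shows "((\<lambda>r. Phi h r t) has_field_derivative Phi_r h r t) (at r within S)"
  unfolding Phi_def Phi_r_def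
  using has_field_derivative_inner[OF h_radial_derivative[OF assms, of t S] h_radial_derivative[OF assms, of t S]]
  by (simp add: inner_commute)

lemma Phi_r_radial_derivative:
  assumes "r \<in> {a<..<R}"
  shows "((\<lambda>r. Phi_r h r t) has_field_derivative Phi_rr h r t) (at r within S)"
  unfolding Phi_r_def Phi_rr_def
  using DERIV_cmult[OF has_field_derivative_inner[OF h_radial_derivative[OF assms, of t S]
      h_r_radial_derivative[OF assms, of t S]], of 2]
  by (simp add: inner_commute algebra_simps)

lemma Phi_t_angular_derivative:
  assumes "r \<in> {a<..<R}"
  shows "((\<lambda>s. Phi_t h r s) has_field_derivative Phi_tt h r s) (at s within S)"
  unfolding Phi_t_def Phi_tt_def
  using DERIV_cmult[OF has_field_derivative_inner[OF h_angular_derivative[OF assms, of s S]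
      h_t_angular_derivative[OF assms, of s S]], of 2]
  by (simp add: inner_commute algebra_simps)

lemma polar_laplacian_Phi:
  "r \<in> {a<..<R} \<Longrightarrow>
    r * (Phi_r h r t + r * Phi_rr h r t) + Phi_tt h r t = 2 * r\<^sup>2 * Dnorm2 h (of_real r * cis t)"
  unfolding Phi_r_def Phi_rr_def Phi_tt_def h_r_def h_rr_def h_t_def h_tt_def Dnorm2_eq_px_py
  by (rule polar_laplacian_identity[OF sin_cos_squared_add2 laplace[OF polar_in_annulus]])

lemma continuous_on_Phi_circle: "r \<in> {a<..<R} \<Longrightarrow> continuous_on T (Phi h r)"
  unfolding Phi_def by (intro continuous_intros continuous_on_circle[OF continuous_on_h])

lemma continuous_on_Phi_r_circle: "r \<in> {a<..<R} \<Longrightarrow> continuous_on T (Phi_r h r)"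
  unfolding Phi_r_def h_r_def
  by (intro continuous_intros continuous_on_circle[OF continuous_on_h]
      continuous_on_circle[OF continuous_on_px] continuous_on_circle[OF continuous_on_py])

lemma continuous_on_Phi_rr_circle: "r \<in> {a<..<R} \<Longrightarrow> continuous_on T (Phi_rr h r)"
  unfolding Phi_rr_def h_r_def h_rr_def
  by (intro continuous_intros continuous_on_circle[OF continuous_on_h]
      continuous_on_circle[OF continuous_on_px] continuous_on_circle[OF continuous_on_py]
      continuous_on_circle[OF continuous_on_pxx] continuous_on_circle[OF continuous_on_pxy]
      continuous_on_circle[OF continuous_on_pyx] continuous_on_circle[OF continuous_on_pyy])

lemma continuous_on_Phi_tt_circle: "r \<in> {a<..<R} \<Longrightarrow> continuous_on T (Phi_tt h r)"
  unfolding Phi_tt_def h_t_def h_tt_def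
  by (intro continuous_intros continuous_on_circle[OF continuous_on_h]
      continuous_on_circle[OF continuous_on_px] continuous_on_circle[OF continuous_on_py]
      continuous_on_circle[OF continuous_on_pxx] continuous_on_circle[OF continuous_on_pxy]
      continuous_on_circle[OF continuous_on_pyx] continuous_on_circle[OF continuous_on_pyy])

lemma continuous_on_Phi_r_polar: "continuous_on ({a<..<R} \<times> T) (\<lambda>(r,t). Phi_r h r t)"
  unfolding Phi_r_def h_r_def split_beta
  by (intro continuous_intros continuous_on_polar[OF continuous_on_h]
      continuous_on_polar[OF continuous_on_px] continuous_on_polar[OF continuous_on_py])

lemma continuous_on_Phi_rr_polar: "continuous_on ({a<..<R} \<times> T) (\<lambda>(r,t). Phi_rr h r t)"
  unfolding Phi_rr_def h_r_def h_rr_def split_beta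
  by (intro continuous_intros continuous_on_polar[OF continuous_on_h]
      continuous_on_polar[OF continuous_on_px] continuous_on_polar[OF continuous_on_py]
      continuous_on_polar[OF continuous_on_pxx] continuous_on_polar[OF continuous_on_pxy]
      continuous_on_polar[OF continuous_on_pyx] continuous_on_polar[OF continuous_on_pyy])

lemma has_field_derivative_circle_integral:
  fixes f f' :: "real \<Rightarrow> real \<Rightarrow> real"
  assumes "\<And>r t. r \<in> {a<..<R} \<Longrightarrow> ((\<lambda>r. f r t) has_field_derivative f' r t) (at r within {a<..<R})"
    and "\<And>r. r \<in> {a<..<R} \<Longrightarrow> continuous_on {0..2*pi} (f r)"
    and "continuous_on ({a<..<R} \<times> {0..2*pi}) (\<lambda>(r,t). f' r t)"
    and r: "r \<in> {a<..<R}"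
  shows "((\<lambda>r. integral {0..2*pi} (f r)) has_field_derivative integral {0..2*pi} (f' r)) (at r)"
proof -
  have "((\<lambda>r. integral (cbox 0 (2*pi)) (f r)) has_field_derivative integral (cbox 0 (2*pi)) (f' r))
      (at r within {a<..<R})"
    by (rule leibniz_rule_field_derivative[OF assms(1) _ _ r])
       (use assms(2,3) in \<open>auto intro: integrable_continuous_real simp: cbox_interval\<close>)
  then show ?thesis
    using r by (simp add: cbox_interval at_within_open[OF _ open_greaterThanLessThan])
qed

lemma U_eq_integral_Phi: "U h r = integral {0..2*pi} (Phi h r) / (2*pi)"
  unfolding U_def Phi_def by (simp add: power2_norm_eq_inner)

lemma has_field_derivative_U: "r \<in> {a<..<R} \<Longrightarrow> (U h has_field_derivative dU h r) (at r)"
  unfolding U_eq_integral_Phi[abs_def] dU_def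
  by (rule DERIV_cdivide, rule has_field_derivative_circle_integral[OF Phi_radial_derivative
      continuous_on_Phi_circle continuous_on_Phi_r_polar])

lemma deriv_U: "r \<in> {a<..<R} \<Longrightarrow> deriv (U h) r = dU h r"
  by (rule DERIV_imp_deriv[OF has_field_derivative_U])

lemma integral_Phi_tt: "r \<in> {a<..<R} \<Longrightarrow> integral {0..2*pi} (Phi_tt h r) = 0"
proof -
  assume r: "r \<in> {a<..<R}"
  have "(Phi_tt h r has_integral (Phi_t h r (2*pi) - Phi_t h r 0)) {0..2*pi}"
    by (rule fundamental_theorem_of_calculus)
       (use r in \<open>auto simp flip: has_real_derivative_iff_has_vector_derivative
          intro!: Phi_t_angular_derivative\<close>)
  moreover have "Phi_t h r (2*pi) = Phi_t h r 0"
    by (simp add: Phi_t_def h_t_def cis.code)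
  ultimately show ?thesis
    by (simp add: integral_unique)
qed

lemma integral_Phi_r_Phi_rr:
  assumes r: "r \<in> {a<..<R}"
  shows "integral {0..2*pi} (Phi_r h r) + r * integral {0..2*pi} (Phi_rr h r) = 2 * r * Dnorm2_circle h r"
proof -
  have "r > 0"
    using r a_nonneg by simp
  then have pointwise: "Phi_r h r t + r * Phi_rr h r t = 2 * r * Dnorm2 h (of_real r * cis t) - Phi_tt h r t / r"
    for t
    using polar_laplacian_Phi[OF r, of t] by (simp add: field_simps power2_eq_square)
  have int: "Phi_r h r integrable_on {0..2*pi}" "Phi_rr h r integrable_on {0..2*pi}"
    "Phi_tt h r integrable_on {0..2*pi}" "(\<lambda>t. Dnorm2 h (of_real r * cis t)) integrable_on {0..2*pi}"
    by (intro integrable_continuous_real continuous_on_Phi_r_circle continuous_on_Phi_rr_circle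
        continuous_on_Phi_tt_circle continuous_on_circle[OF continuous_on_Dnorm2] r)+
  have "integral {0..2*pi} (Phi_r h r) + r * integral {0..2*pi} (Phi_rr h r)
      = integral {0..2*pi} (\<lambda>t. Phi_r h r t + r * Phi_rr h r t)"
    using integral_add[OF int(1) integrable_on_mult_right[OF int(2)]] by simp
  also have "\<dots> = integral {0..2*pi} (\<lambda>t. 2 * r * Dnorm2 h (of_real r * cis t) - Phi_tt h r t / r)"
    by (simp add: pointwise)
  also have "\<dots> = 2 * r * Dnorm2_circle h r - integral {0..2*pi} (Phi_tt h r) / r"
    using integral_diff[OF integrable_on_mult_right[OF int(4)] integrable_on_divide[OF int(3)]]
    by (simp add: Dnorm2_circle_def)
  finally show ?thesis
    using integral_Phi_tt[OF r] by simp
qed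

lemma has_field_derivative_rho_dU:
  assumes r: "r \<in> {a<..<R}"
  shows "((\<lambda>r. r * dU h r) has_field_derivative r / pi * Dnorm2_circle h r) (at r)"
proof -
  have "((\<lambda>r. integral {0..2*pi} (Phi_r h r)) has_field_derivative integral {0..2*pi} (Phi_rr h r)) (at r)"
    by (intro has_field_derivative_circle_integral Phi_r_radial_derivative
        continuous_on_Phi_r_circle continuous_on_Phi_rr_polar r)
  then have "(dU h has_field_derivative integral {0..2*pi} (Phi_rr h r) / (2*pi)) (at r)"
    unfolding dU_def[abs_def] by (rule DERIV_cdivide)
  from DERIV_mult[OF DERIV_ident this]
  have "((\<lambda>r. r * dU h r) has_field_derivative
      1 * dU h r + integral {0..2*pi} (Phi_rr h r) / (2*pi) * r) (at r)" .
  moreover have "1 * dU h r + integral {0..2*pi} (Phi_rr h r) / (2*pi) * r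
      = (integral {0..2*pi} (Phi_r h r) + r * integral {0..2*pi} (Phi_rr h r)) / (2*pi)"
    by (simp add: dU_def field_simps)
  ultimately show ?thesis
    using integral_Phi_r_Phi_rr[OF r] by simp
qed

lemma Dnorm2_circle_nonneg: "r \<in> {a<..<R} \<Longrightarrow> 0 \<le> Dnorm2_circle h r"
  unfolding Dnorm2_circle_def
  by (intro integral_nonneg integrable_continuous_real continuous_on_circle[OF continuous_on_Dnorm2])
     (auto simp: Dnorm2_nonneg)

lemma has_integral_Dnorm2_circle:
  assumes "a < s" "s \<le> t" "t < R"
  shows "((\<lambda>r. r / pi * Dnorm2_circle h r) has_integral (t * dU h t - s * dU h s)) {s..t}"
proof (rule fundamental_theorem_of_calculus[OF assms(2)])
  fix r assume "r \<in> {s..t}"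
  then have "r \<in> {a<..<R}"
    using assms by auto
  from has_field_derivative_at_within[OF has_field_derivative_rho_dU[OF this]]
  show "((\<lambda>r. r * dU h r) has_vector_derivative r / pi * Dnorm2_circle h r) (at r within {s..t})"
    by (simp only: has_real_derivative_iff_has_vector_derivative)
qed

lemma has_integral_Dnorm2_annulus:
  assumes "a < s" "s < t" "t < R"
  shows "(Dnorm2 h has_integral pi * (t * dU h t - s * dU h s)) (annulus s t)"
proof -
  have cont: "continuous_on {z. s \<le> cmod z \<and> cmod z \<le> t} (Dnorm2 h)"
    by (rule continuous_on_subset[OF continuous_on_Dnorm2]) (use assms in \<open>auto simp: annulus_def\<close>)
  have "integral {s..t} (\<lambda>r. integral {0..2*pi} (\<lambda>\<theta>. r * Dnorm2 h (of_real r * cis \<theta>)))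
      = integral {s..t} (\<lambda>r. pi * (r / pi * Dnorm2_circle h r))"
    by (rule integral_cong) (simp add: Dnorm2_circle_def)
  also have "\<dots> = pi * (t * dU h t - s * dU h s)"
    using integral_unique[OF has_integral_Dnorm2_circle[of s t]] assms by (simp add: field_simps)
  finally show ?thesis
    using has_integral_annulus_polar[OF _ _ cont] assms a_nonneg by simp
qed

lemma rho_dU_mono:
  assumes "a < s" "s \<le> t" "t < R"
  shows "s * dU h s \<le> t * dU h t"
proof -
  have "0 \<le> integral {s..t} (\<lambda>r. r / pi * Dnorm2_circle h r)"
    by (rule integral_nonneg)
       (use has_integral_Dnorm2_circle[OF assms] Dnorm2_circle_nonneg assms a_nonneg in auto)
  then show ?thesis
    using integral_unique[OF has_integral_Dnorm2_circle[OF assms]] by simp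
qed

lemma Dnorm2_vanishes_on_circle:
  assumes r: "r \<in> {a<..<R}" and "Dnorm2_circle h r = 0" and "cmod z = r"
  shows "Dnorm2 h z = 0"
proof -
  have "\<forall>\<theta>\<in>{0..2*pi}. Dnorm2 h (of_real r * cis \<theta>) = 0"
    using assms(2) integral_eq_0_iff[OF continuous_on_circle[OF continuous_on_Dnorm2 r]]
    by (simp add: Dnorm2_circle_def Dnorm2_nonneg)
  moreover have "z = of_real (cmod z) * cis (Arg2pi z)"
    by (simp add: complex_eq_iff cos_Arg2pi sin_Arg2pi)
  ultimately show ?thesis
    using Arg2pi[of z] assms(3) by (metis atLeastAtMost_iff less_imp_le)
qed

lemma not_inj_on_if_Dnorm2_vanishes:
  assumes "a \<le> s" "s < t" "t \<le> R" and zero: "\<And>z. z \<in> annulus s t \<Longrightarrow> Dnorm2 h z = 0"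
  shows "\<not> inj_on h (annulus a R)"
proof
  assume inj: "inj_on h (annulus a R)"
  define c :: complex where "c = of_real ((s + t) / 2)"
  define e where "e = (t - s) / 2"
  have e: "0 < e"
    using assms by (simp add: e_def)
  have ball: "ball c e \<subseteq> annulus s t"
  proof
    fix z assume "z \<in> ball c e"
    then have "\<bar>cmod c - cmod z\<bar> < e"
      by (metis dist_norm mem_ball norm_triangle_ineq3 order.strict_trans1)
    moreover have "cmod c = (s + t) / 2"
      using assms a_nonneg unfolding c_def norm_of_real by simp
    ultimately show "z \<in> annulus s t"
      by (auto simp: annulus_def e_def abs_less_iff field_simps)
  qed
  have sub: "annulus s t \<subseteq> annulus a R"
    using assms by (auto simp: annulus_def)
  have "(h has_derivative (\<lambda>v. 0)) (at z within ball c e)" if "z \<in> ball c e" for z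
  proof -
    have z: "z \<in> annulus a R" "Dnorm2 h z = 0"
      using that ball sub zero by auto
    then have "px h z = 0" "py h z = 0"
      by (simp_all add: Dnorm2_eq_px_py add_nonneg_eq_0_iff)
    then show ?thesis
      using has_derivative_px_py[OF differentiable_h[OF z(1)]] by (simp add: has_derivative_at_withinI)
  qed
  then obtain k where k: "\<And>z. z \<in> ball c e \<Longrightarrow> h z = k"
    using has_derivative_zero_constant[OF convex_ball] by blast
  have "c \<in> ball c e" "c + of_real (e/2) \<in> ball c e"
    using e by (simp_all add: dist_norm)
  then have "c = c + of_real (e/2)"
    using inj k ball sub unfolding inj_on_def by (metis subsetD)
  then show False
    using e by simp
qed

lemma rho_dU_strict_mono:
  assumes inj: "inj_on h (annulus a R)"
  shows "strict_mono_on {a<..<R} (\<lambda>r. r * dU h r)"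
proof (rule strict_mono_onI, rule ccontr)
  fix x y assume xy: "x \<in> {a<..<R}" "y \<in> {a<..<R}" "x < y" and "\<not> x * dU h x < y * dU h y"
  then have const: "m * dU h m = x * dU h x" if "x \<le> m" "m \<le> y" for m
    using rho_dU_mono[of x m] rho_dU_mono[of m y] that by simp
  have circle: "Dnorm2_circle h m = 0" if m: "x < m" "m < y" for m
  proof -
    have "m / pi * Dnorm2_circle h m = 0"
    proof (rule DERIV_local_const[OF has_field_derivative_rho_dU])
      show "m \<in> {a<..<R}" "0 < min (m - x) (y - m)"
        using m xy by auto
      show "\<forall>z. \<bar>m - z\<bar> < min (m - x) (y - m) \<longrightarrow> m * dU h m = z * dU h z"
      proof (intro allI impI)
        fix z assume "\<bar>m - z\<bar> < min (m - x) (y - m)"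
        then have "x \<le> z" "z \<le> y"
          by (auto simp: abs_less_iff)
        then show "m * dU h m = z * dU h z"
          using const[of z] const[of m] m by simp
      qed
    qed
    moreover have "0 < m"
      using m xy a_nonneg by auto
    ultimately show ?thesis
      by simp
  qed
  have "Dnorm2 h z = 0" if "z \<in> annulus x y" for z
  proof (rule Dnorm2_vanishes_on_circle[of "cmod z", OF _ circle])
    show "cmod z \<in> {a<..<R}" "x < cmod z" "cmod z < y"
      using that xy by (auto simp: annulus_def)
  qed simp
  moreover have "a \<le> x" "y \<le> R"
    using xy by auto
  ultimately show False
    using not_inj_on_if_Dnorm2_vanishes[of x y] \<open>x < y\<close> inj by blast
qed

lemma tendsto_rho_dU_Inf:
  assumes "a < R" and bdd: "bdd_below ((\<lambda>r. r * dU h r) ` {a<..<R})"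
  shows "((\<lambda>r. r * dU h r) \<longlongrightarrow> (INF r\<in>{a<..<R}. r * dU h r)) (at_right a)"
proof (rule tendstoI)
  fix e :: real assume e: "0 < e"
  let ?L = "INF r\<in>{a<..<R}. r * dU h r"
  obtain r where r: "r \<in> {a<..<R}" "r * dU h r < ?L + e"
    using cInf_lessD[of "(\<lambda>r. r * dU h r) ` {a<..<R}" "?L + e"] e assms(1) by auto
  have close: "dist (s * dU h s) ?L < e" if "a < s" "s < r" for s
  proof -
    have "?L \<le> s * dU h s"
      using that r by (auto intro!: cInf_lower bdd)
    moreover have "s * dU h s \<le> r * dU h r"
      using that r by (auto intro!: rho_dU_mono)
    ultimately show ?thesis
      using r by (simp add: dist_real_def)
  qed
  then show "\<forall>\<^sub>F s in at_right a. dist (s * dU h s) ?L < e"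
    unfolding eventually_at_right_field using r close by (intro exI[of _ r]) auto
qed

lemma Dnorm2_integral_annulus_inner:
  assumes r: "r \<in> {a<..<R}" and L: "((\<lambda>s. s * dU h s) \<longlongrightarrow> L) (at_right a)"
  shows "Dnorm2 h integrable_on annulus a r \<and> integral (annulus a r) (Dnorm2 h) = pi * (r * dU h r - L)"
proof (rule has_integral_nonneg_annulus_exhaustion)
  show "((\<lambda>s. pi * (r * dU h r - s * dU h s)) \<longlongrightarrow> pi * (r * dU h r - L)) (at_right a)"
    by (intro tendsto_intros L)
  show "(Dnorm2 h has_integral pi * (r * dU h r - s * dU h s)) (annulus s r)" if "a < s" "s < r" for s
    using that r by (intro has_integral_Dnorm2_annulus) auto
qed (use r a_nonneg in \<open>auto simp: Dnorm2_nonneg\<close>)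

lemma continuous_on_norm_sq_circle:
  "r \<in> {a<..<R} \<Longrightarrow> continuous_on T (\<lambda>t. (cmod (h (of_real r * cis t)))\<^sup>2)"
  by (intro continuous_intros continuous_on_circle[OF continuous_on_h])

lemma U_le_sq:
  assumes r: "r \<in> {a<..<R}" and M: "\<And>t. cmod (h (of_real r * cis t)) \<le> M"
  shows "U h r \<le> M\<^sup>2"
proof -
  have "integral {0..2*pi} (\<lambda>t. (cmod (h (of_real r * cis t)))\<^sup>2) \<le> integral {0..2*pi} (\<lambda>t. M\<^sup>2)"
    by (rule integral_le) (auto intro!: integrable_continuous_real continuous_on_norm_sq_circle[OF r] power_mono M)
  then show ?thesis
    by (simp add: U_def field_simps)
qed

end

section \<open>Maps of the class \<open>H(A, *)\<close>\<close>

locale H_star_map =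
  fixes R :: real and h :: "complex \<Rightarrow> complex"
  assumes R_gt_1: "1 < R" and H_star: "h \<in> H_star R"

sublocale H_star_map \<subseteq> harmonic_annulus 1 R h
  using H_star by unfold_locales (simp_all add: H_star_def)

context H_star_map
begin

lemma inj_on_h: "inj_on h (annulus 1 R)"
proof -
  obtain g where "homeomorphism (annulus 1 R) (h ` annulus 1 R) h g"
    using H_star by (auto simp: H_star_def)
  then show ?thesis
    unfolding homeomorphism_def by (metis inj_on_inverseI)
qed

lemma norm_h_gt_1:
  assumes z: "z \<in> annulus 1 R"
  shows "1 < cmod (h z)"
proof (rule ccontr)
  assume "\<not> 1 < cmod (h z)"
  then have "h z \<in> connected_component_set (- h ` annulus 1 R) 0"
    using H_star by (simp add: H_star_def)
  then show False
    using connected_component_subset z by blast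
qed

lemma norm_h_tendsto_1:
  "0 < e \<Longrightarrow> \<exists>d>0. \<forall>z\<in>annulus 1 R. cmod z < 1 + d \<longrightarrow> \<bar>cmod (h z) - 1\<bar> < e"
  using H_star by (simp add: H_star_def)

lemma U_gt_1:
  assumes r: "r \<in> {1<..<R}"
  shows "1 < U h r"
proof -
  have "integral {0..2*pi} (\<lambda>t. 1) < integral {0..2*pi} (\<lambda>t. (cmod (h (of_real r * cis t)))\<^sup>2)"
  proof (rule integral_less_real)
    show "1 < (cmod (h (of_real r * cis t)))\<^sup>2" for t
      using norm_h_gt_1[OF polar_in_annulus[OF r]] by simp
    show "{0<..<2*pi} \<noteq> {}"
      using pi_gt_zero by (simp add: not_le)
  qed (auto intro: continuous_on_norm_sq_circle[OF r])
  then show ?thesis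
    by (simp add: U_def field_simps)
qed

lemma eventually_U_less:
  assumes V: "1 < V"
  shows "\<forall>\<^sub>F r in at_right 1. U h r < V"
proof -
  define e where "e = min 1 ((V - 1) / 4)"
  have e: "0 < e" "e \<le> 1" "4 * e \<le> V - 1"
    using V by (auto simp: e_def min_def)
  obtain d where d: "0 < d" "\<And>z. z \<in> annulus 1 R \<Longrightarrow> cmod z < 1 + d \<Longrightarrow> \<bar>cmod (h z) - 1\<bar> < e"
    using norm_h_tendsto_1[OF e(1)] by blast
  have "U h r < V" if r: "1 < r" "r < min (1 + d) R" for r
  proof -
    have bound: "cmod (h (of_real r * cis t)) \<le> 1 + e" for t
    proof -
      have "r \<in> {1<..<R}" "cmod (of_real r * cis t) < 1 + d"
        using r by (auto simp: norm_mult)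
      then show ?thesis
        using d(2)[OF polar_in_annulus] by fastforce
    qed
    have "U h r \<le> (1 + e)\<^sup>2"
      by (rule U_le_sq[OF _ bound]) (use r in auto)
    also have "\<dots> \<le> 1 + 3 * e"
      using e by (simp add: power2_eq_square algebra_simps mult_left_le)
    finally show ?thesis
      using e by linarith
  qed
  then show ?thesis
    unfolding eventually_at_right_field using d(1) R_gt_1 by (intro exI[of _ "min (1 + d) R"]) auto
qed

text \<open>Were \<open>r U'(r)\<close> negative somewhere, it would stay negative further in, so \<open>U\<close> would
  increase towards the inner boundary, where it tends to \<open>1 < U\<close>.\<close>

lemma rho_dU_nonneg:
  assumes r0: "r0 \<in> {1<..<R}"
  shows "0 \<le> r0 * dU h r0"
proof (rule ccontr)
  assume neg: "\<not> 0 \<le> r0 * dU h r0"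
  obtain b where b: "1 < b" "\<And>r. 1 < r \<Longrightarrow> r < b \<Longrightarrow> U h r < U h r0"
    using eventually_U_less[OF U_gt_1[OF r0]] unfolding eventually_at_right_field by blast
  define r where "r = (1 + min b r0) / 2"
  have r: "1 < r" "r < r0" "U h r < U h r0"
    using b r0 by (auto simp: r_def intro!: b(2))
  have "\<forall>x. r \<le> x \<and> x \<le> r0 \<longrightarrow> DERIV (U h) x :> dU h x"
    using r r0 by (auto intro!: has_field_derivative_U)
  then obtain \<xi> where \<xi>: "r < \<xi>" "\<xi> < r0" "U h r0 - U h r = (r0 - r) * dU h \<xi>"
    using MVT2[OF r(2)] by blast
  have "\<xi> * dU h \<xi> \<le> r0 * dU h r0"
    using \<xi> r r0 by (intro rho_dU_mono) auto
  then have "\<xi> * dU h \<xi> < 0"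
    using neg by linarith
  then have "dU h \<xi> < 0"
    using \<xi> r by (simp add: mult_less_0_iff)
  then have "U h r0 - U h r < 0"
    using \<xi> by (simp add: mult_pos_neg)
  then show False
    using r by linarith
qed

end

theorem mainTheorem6:
  fixes R :: real and h :: "complex \<Rightarrow> complex"
  assumes "1 < R" and "h \<in> H_star R"
  shows "(\<forall>\<rho>\<in>{1<..<R}. U h differentiable (at \<rho>)) \<and>
         strict_mono_on {1<..<R} (\<lambda>\<rho>. \<rho> * deriv (U h) \<rho>) \<and>
         (\<forall>\<rho>\<in>{1<..<R}. U h \<rho> > 1) \<and>
         (\<exists>L::real. ((\<lambda>\<rho>. \<rho> * deriv (U h) \<rho>) \<longlongrightarrow> L) (at_right 1) \<and> 0 \<le> L \<and>
            (\<forall>\<rho>\<in>{1<..<R}. Dnorm2 h integrable_on annulus 1 \<rho> \<and>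
               (1 / pi) * integral (annulus 1 \<rho>) (Dnorm2 h) = \<rho> * deriv (U h) \<rho> - L))"
proof -
  interpret H_star_map R h
    using assms by unfold_locales
  define L where "L = (INF r\<in>{1<..<R}. r * dU h r)"
  have bdd: "bdd_below ((\<lambda>r. r * dU h r) ` {1<..<R})"
    by (rule bdd_belowI[of _ 0]) (auto simp: rho_dU_nonneg)
  have L: "((\<lambda>r. r * dU h r) \<longlongrightarrow> L) (at_right 1)"
    unfolding L_def by (rule tendsto_rho_dU_Inf[OF R_gt_1 bdd])
  have "\<forall>\<^sub>F r in at_right 1. r * dU h r = r * deriv (U h) r"
    unfolding eventually_at_right_field using R_gt_1 by (intro exI[of _ R]) (auto simp: deriv_U)
  then have "((\<lambda>r. r * deriv (U h) r) \<longlongrightarrow> L) (at_right 1)"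
    by (rule tendsto_cong[THEN iffD1, OF _ L])
  moreover have "0 \<le> L"
    unfolding L_def using R_gt_1 by (intro cINF_greatest) (auto simp: rho_dU_nonneg)
  moreover have "Dnorm2 h integrable_on annulus 1 r \<and>
      1 / pi * integral (annulus 1 r) (Dnorm2 h) = r * deriv (U h) r - L" if "r \<in> {1<..<R}" for r
    using Dnorm2_integral_annulus_inner[OF that L] that by (simp add: deriv_U)
  moreover have "strict_mono_on {1<..<R} (\<lambda>r. r * deriv (U h) r)"
    using rho_dU_strict_mono[OF inj_on_h] by (auto simp: strict_mono_on_def deriv_U)
  moreover have "U h differentiable (at r)" if "r \<in> {1<..<R}" for r
    using has_field_derivative_U[OF that] real_differentiable_def by blast
  ultimately show ?thesis
    using U_gt_1 by blast
qed

end
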